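(* Consider algorithm naive-fvs with step 4 replaced by the modified step 4'. For every graph $G$ and integer $k$, every execution path of this algorithm started on $(G,k,\emptyset)$ that leads to a solution satisfies $|F'|\le 2|V_-|$.
   Context: All graphs are finite, simple and undirected; $d_G(v)$ denotes the degree of $v$ in $G$, $G-S$ denotes deletion of a vertex set $S$, and $G[S]$ the induced subgraph. A feedback vertex set of $G$ is a set $V_-\subseteq V(G)$ such that $G-V_-$ is a forest. Algorithm naive-fvs$(G,k,F)$ (with $k$ an integer and $F\subseteq V(G)$ inducing a forest) returns a set of vertices or ``NO'' as follows (all choices among several candidates are arbitrary; degrees are in the current graph $G$): (0) If $k<0$ return NO; if $V(G)=\emptyset$ return $\emptyset$. (1) If some vertex $v$ has degree less than $2$, return naive-fvs$(G-\{v\},k,F\setminus\{v\})$. (2) If some $v\in V(G)\setminus F$ has two neighbors in the same connected component of $G[F]$, let $X=$ naive-fvs$(G-\{v\},k-1,F)$ and return $X\cup\{v\}$ (NO if $X$ is NO). (3) Pick $v\in V(G)\setminus F$ of maximum degree. (4) If $d(v)=2$: set $X=\emptyset$; while $G$ contains a cycle $C$, take any vertex $x$ of $C$ not in $F$, add $x$ to $X$ and delete $x$ from $G$; then return $X$ if $|X|\le k$, else NO. (5) Let $X=$ naive-fvs$(G-\{v\},k-1,F)$; if $X$ is not NO, return $X\cup\{v\}$. (6) Return naive-fvs$(G,k,F\cup\{v\})$. The modified step 4 is: (4') If $d(v)\le 3$, compute a minimum-size set $X\subseteq V(G)\setminus F$ such that $G-X$ is a forest, and return $X$ if $|X|\le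 k$, else NO. An execution path is a sequence of calls $c_0,c_1,\dots,c_t$ where $c_0$ is the call on $(G,k,\emptyset)$; for each $j<t$, $c_{j+1}$ is the recursive call made by $c_j$ in step 1 or step 2, or, if $c_j$ reaches step 5, either the call of step 5 or the call of step 6 (the latter considered even if the algorithm would not actually make it); and $c_t$ terminates in step 0 or step 4' without recursion. It leads to a solution if $c_t$ returns a set (not NO). $V_-$ denotes the set of vertices deleted along the path in step 2, in step 5 (when the path follows the step-5 call), together with the set $X$ returned in step 4' of $c_t$ (if $c_t$ ends there); $F'$ denotes the set of vertices added to $F$ by step 6 (when the path follows the step-6 call). *)

theory Defs
  imports Main
begin

definition simple_graph :: "'a set \<Rightarrow> 'a set set \<Rightarrow> bool" where
  "simple_graph V E \<longleftrightarrow> finite V \<and> (\<forall>e\<in>E. \<exists>u v. e = {u, v} \<and> u \<in> V \<and> v \<in> V \<and> u \<noteq> v)"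

definition deg :: "'a set set \<Rightarrow> 'a \<Rightarrow> nat" where
  "deg E v = card {u. {u, v} \<in> E}"

definition del_edges :: "'a set set \<Rightarrow> 'a set \<Rightarrow> 'a set set" where
  "del_edges E S = {e \<in> E. e \<inter> S = {}}"

definition is_cycle :: "'a set set \<Rightarrow> 'a list \<Rightarrow> bool" where
  "is_cycle E cs \<longleftrightarrow> length cs \<ge> 3 \<and> distinct cs \<and>
     (\<forall>i < length cs. {cs ! i, cs ! ((i + 1) mod length cs)} \<in> E)"

definition forest :: "'a set \<Rightarrow> 'a set set \<Rightarrow> bool" where
  "forest V E \<longleftrightarrow> \<not> (\<exists>cs. set cs \<subseteq> V \<and> is_cycle E cs)"

definition same_comp :: "'a set set \<Rightarrow> 'a set \<Rightarrow> 'a \<Rightarrow> 'a \<Rightarrow> bool" where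
  "same_comp E F u w \<longleftrightarrow> u \<in> F \<and> w \<in> F \<and>
     (\<lambda>a b. a \<in> F \<and> b \<in> F \<and> {a, b} \<in> E)\<^sup>*\<^sup>* u w"

definition step2_vertex :: "'a set \<Rightarrow> 'a set set \<Rightarrow> 'a set \<Rightarrow> 'a \<Rightarrow> bool" where
  "step2_vertex V E F v \<longleftrightarrow> v \<in> V - F \<and>
     (\<exists>u w. u \<noteq> w \<and> {u, v} \<in> E \<and> {w, v} \<in> E \<and> same_comp E F u w)"

text \<open>Preconditions under which a call reaches step 3 (steps 0, 1, 2 do not apply).\<close>
definition reaches_step3 :: "'a set \<Rightarrow> 'a set set \<Rightarrow> int \<Rightarrow> 'a set \<Rightarrow> bool" where
  "reaches_step3 V E k F \<longleftrightarrow> k \<ge> 0 \<and> V \<noteq> {} \<and> (\<forall>u\<in>V. deg E u \<ge> 2) \<and>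
     (\<forall>u. \<not> step2_vertex V E F u)"

definition max_deg_choice :: "'a set \<Rightarrow> 'a set set \<Rightarrow> 'a set \<Rightarrow> 'a \<Rightarrow> bool" where
  "max_deg_choice V E F v \<longleftrightarrow> v \<in> V - F \<and> (\<forall>u\<in>V - F. deg E u \<le> deg E v)"

definition min_fvs_avoiding :: "'a set \<Rightarrow> 'a set set \<Rightarrow> 'a set \<Rightarrow> 'a set \<Rightarrow> bool" where
  "min_fvs_avoiding V E F X \<longleftrightarrow> X \<subseteq> V - F \<and> forest (V - X) (del_edges E X) \<and>
     (\<forall>Y. Y \<subseteq> V - F \<and> forest (V - Y) (del_edges E Y) \<longrightarrow> card X \<le> card Y)"

text \<open>fvs_path V E k F Vm F': there is an execution path of the modified algorithm
  (step 4 replaced by step 4') starting at the call on (G,k,F), G = (V,E),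
  which leads to a solution, where Vm is the set V_- of vertices deleted along the
  path in steps 2 and 5 together with the set X returned in step 4', and F' is the
  set of vertices added to F in step 6 along the path.\<close>
inductive fvs_path :: "'a set \<Rightarrow> 'a set set \<Rightarrow> int \<Rightarrow> 'a set \<Rightarrow> 'a set \<Rightarrow> 'a set \<Rightarrow> bool" where
  step0: "k \<ge> 0 \<Longrightarrow> V = {} \<Longrightarrow> fvs_path V E k F {} {}"
| step1: "k \<ge> 0 \<Longrightarrow> V \<noteq> {} \<Longrightarrow> v \<in> V \<Longrightarrow> deg E v < 2 \<Longrightarrow>
     fvs_path (V - {v}) (del_edges E {v}) k (F - {v}) Vm F' \<Longrightarrow> fvs_path V E k F Vm F'"
| step2: "k \<ge> 0 \<Longrightarrow> V \<noteq> {} \<Longrightarrow> (\<forall>u\<in>V. deg E u \<ge> 2) \<Longrightarrow> step2_vertex V E F v \<Longrightarrow>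
     fvs_path (V - {v}) (del_edges E {v}) (k - 1) F Vm F' \<Longrightarrow> fvs_path V E k F (insert v Vm) F'"
| step4': "reaches_step3 V E k F \<Longrightarrow> max_deg_choice V E F v \<Longrightarrow> deg E v \<le> 3 \<Longrightarrow>
     min_fvs_avoiding V E F X \<Longrightarrow> int (card X) \<le> k \<Longrightarrow> fvs_path V E k F X {}"
| step5: "reaches_step3 V E k F \<Longrightarrow> max_deg_choice V E F v \<Longrightarrow> \<not> deg E v \<le> 3 \<Longrightarrow>
     fvs_path (V - {v}) (del_edges E {v}) (k - 1) F Vm F' \<Longrightarrow> fvs_path V E k F (insert v Vm) F'"
| step6: "reaches_step3 V E k F \<Longrightarrow> max_deg_choice V E F v \<Longrightarrow> \<not> deg E v \<le> 3 \<Longrightarrow>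
     fvs_path V E k (insert v F) Vm F' \<Longrightarrow> fvs_path V E k F Vm (insert v F')"

end

theory Submission
  imports Defs
begin

text \<open>
  Measure progress by the potential
  Psi(G, F) = (sum over u in F of d(u) - 2) + (sum over u not in F of min 0 (d(u) - 2)),
  and let D \<ge> 4 bound the degrees of the vertices outside F. Along any execution path
  D |F'| + 2 Psi \<le> 2 D |V_-|. Step 6 puts a vertex of maximum degree d \<ge> 4 into F, and the
  increase 2 (d - 2) \<ge> d of 2 Psi pays for the new element of F' (the bound can be lowered
  from D to d here because Psi \<ge> 0 once all degrees are at least 2). Deleting a vertex of
  degree at most D outside F (steps 2, 5, 4') lowers Psi by at most D, which a new element of
  V_- pays for; deleting a vertex of degree at most 1 (step 1) never raises Psi; and a forest
  has Psi \<le> 0. While F is empty only steps 1, 2 and 5 occur, and the first step 6 starts the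
  invariant with Psi = d - 2, which yields |F'| \<le> 2 |V_-|.
\<close>

lemma neighbours_subset: "simple_graph V E \<Longrightarrow> {u. {u, v} \<in> E} \<subseteq> V"
  unfolding simple_graph_def by (auto simp: doubleton_eq_iff)

lemma finite_neighbours: "simple_graph V E \<Longrightarrow> finite {u. {u, v} \<in> E}"
  using neighbours_subset simple_graph_def finite_subset by metis

lemma simple_graph_no_loop: "simple_graph V E \<Longrightarrow> {x, x} \<notin> E"
  unfolding simple_graph_def by (auto simp: doubleton_eq_iff)

lemma simple_graph_del_edges: "simple_graph V E \<Longrightarrow> simple_graph (V - S) (del_edges E S)"
  unfolding simple_graph_def del_edges_def by fastforce

lemma del_edges_empty [simp]: "del_edges E {} = E"
  by (auto simp: del_edges_def)

lemma deg_del_edges_le: "simple_graph V E \<Longrightarrow> deg (del_edges E S) u \<le> deg E u"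
  unfolding deg_def by (rule card_mono[OF finite_neighbours]) (auto simp: del_edges_def)

lemma deg_del_edges_singleton:
  assumes "simple_graph V E" and "u \<noteq> v"
  shows "deg (del_edges E {v}) u = deg E u - of_bool ({u, v} \<in> E)"
proof -
  have "{w. {w, u} \<in> del_edges E {v}} = {w. {w, u} \<in> E} - {v}"
    using \<open>u \<noteq> v\<close> by (auto simp: del_edges_def)
  moreover have "v \<in> {w. {w, u} \<in> E} \<longleftrightarrow> {u, v} \<in> E"
    by (simp add: insert_commute)
  ultimately show ?thesis
    unfolding deg_def using finite_neighbours[OF assms(1), of u] by auto
qed

lemma deg_pos_if_edge: "simple_graph V E \<Longrightarrow> {u, v} \<in> E \<Longrightarrow> 0 < deg E u"
  unfolding deg_def using finite_neighbours[of V E u]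
  by (metis card_gt_0_iff empty_iff insert_commute mem_Collect_eq)

lemma is_cycle_mono: "E' \<subseteq> E \<Longrightarrow> is_cycle E' cs \<Longrightarrow> is_cycle E cs"
  unfolding is_cycle_def by auto

lemma forest_del_edges: "forest V E \<Longrightarrow> forest (V - S) (del_edges E S)"
  unfolding forest_def using is_cycle_mono[of "del_edges E S" E] by (auto simp: del_edges_def)

definition is_path :: "'a set \<Rightarrow> 'a set set \<Rightarrow> 'a list \<Rightarrow> bool" where
  "is_path V E ps \<longleftrightarrow> ps \<noteq> [] \<and> set ps \<subseteq> V \<and> distinct ps \<and>
     (\<forall>i. Suc i < length ps \<longrightarrow> {ps ! i, ps ! Suc i} \<in> E)"

lemma longest_path_exists:
  assumes "finite V" and "v \<in> V"
  obtains ps where "is_path V E ps" and "\<And>qs. is_path V E qs \<Longrightarrow> length qs \<le> length ps"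
proof -
  have "length ps < Suc (card V)" if "is_path V E ps" for ps
    using that card_mono[OF \<open>finite V\<close>] distinct_card
    unfolding is_path_def by (metis less_Suc_eq_le)
  moreover have "is_path V E [v]"
    using \<open>v \<in> V\<close> by (simp add: is_path_def)
  ultimately show ?thesis
    using that ex_has_greatest_nat[of "is_path V E" "[v]" length "Suc (card V)"] by blast
qed

lemma is_path_snoc:
  assumes "is_path V E ps" and "y \<in> V" and "y \<notin> set ps" and "{last ps, y} \<in> E"
  shows "is_path V E (ps @ [y])"
  unfolding is_path_def
proof (intro conjI allI impI)
  show "set (ps @ [y]) \<subseteq> V" and "distinct (ps @ [y])"
    using assms(1-3) by (auto simp: is_path_def)
  fix i assume i: "Suc i < length (ps @ [y])"
  show "{(ps @ [y]) ! i, (ps @ [y]) ! Suc i} \<in> E"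
  proof (cases "Suc i < length ps")
    case True
    then show ?thesis using assms(1) by (auto simp: is_path_def nth_append)
  next
    case False
    then have "i = length ps - 1" and "ps \<noteq> []"
      using i assms(1) by (auto simp: is_path_def)
    then show ?thesis using assms(4) by (auto simp: nth_append last_conv_nth)
  qed
qed simp

lemma is_cycle_drop:
  assumes "is_path V E ps" and "j + 3 \<le> length ps" and "{last ps, ps ! j} \<in> E"
  shows "is_cycle E (drop j ps)"
  unfolding is_cycle_def
proof (intro conjI allI impI)
  show "3 \<le> length (drop j ps)" and "distinct (drop j ps)"
    using assms(1,2) by (auto simp: is_path_def)
  fix i assume i: "i < length (drop j ps)"
  show "{drop j ps ! i, drop j ps ! ((i + 1) mod length (drop j ps))} \<in> E"
  proof (cases "i + 1 < length (drop j ps)")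
    case True
    then show ?thesis using assms(1) by (auto simp: is_path_def)
  next
    case False
    then have "i + 1 = length (drop j ps)" using i by simp
    then have "j + i = length ps - 1" and "(i + 1) mod length (drop j ps) = 0"
      by auto
    moreover have "ps \<noteq> []" using assms(2) by auto
    ultimately have "drop j ps ! i = last ps" and "(i + 1) mod length (drop j ps) = 0"
      using assms(2) by (auto simp: last_conv_nth)
    then show ?thesis
      using assms(2,3) by (simp add: insert_commute)
  qed
qed

lemma min_deg_two_has_cycle:
  assumes sg: "simple_graph V E" and "V \<noteq> {}" and deg2: "\<forall>v\<in>V. 2 \<le> deg E v"
  shows "\<exists>cs. set cs \<subseteq> V \<and> is_cycle E cs"
proof -
  obtain v where "v \<in> V" using \<open>V \<noteq> {}\<close> by auto
  have "finite V" using sg by (simp add: simple_graph_def)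
  obtain ps where ps: "is_path V E ps"
    and longest: "\<And>qs. is_path V E qs \<Longrightarrow> length qs \<le> length ps"
    using longest_path_exists[OF \<open>finite V\<close> \<open>v \<in> V\<close>, of E] by blast
  define n where "n = length ps"
  define x where "x = last ps"
  have "ps \<noteq> []" and "set ps \<subseteq> V" using ps by (auto simp: is_path_def)
  then have "x \<in> V" and x: "ps ! (n - 1) = x" by (auto simp: x_def n_def last_conv_nth)
  text \<open>By maximality of the path, every neighbour of its end lies on it.\<close>
  have on_path: "y \<in> set ps" if "{y, x} \<in> E" for y
  proof (rule ccontr)
    assume "y \<notin> set ps"
    moreover have "y \<in> V" using neighbours_subset[OF sg, of x] that by auto
    ultimately have "is_path V E (ps @ [y])"
      using is_path_snoc[OF ps] that by (simp add: x_def insert_commute)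
    then show False using longest by fastforce
  qed
  have "2 \<le> card {u. {u, x} \<in> E}" using deg2 \<open>x \<in> V\<close> by (simp add: deg_def)
  then have "\<not> {u. {u, x} \<in> E} \<subseteq> {ps ! (n - 2)}"
    using card_mono[of "{ps ! (n - 2)}" "{u. {u, x} \<in> E}"] by auto
  then obtain y where y: "{y, x} \<in> E" and "y \<noteq> ps ! (n - 2)" by blast
  moreover obtain j where j: "j < n" "ps ! j = y"
    using on_path[OF y] by (auto simp: in_set_conv_nth n_def)
  moreover have "y \<noteq> x" using simple_graph_no_loop[OF sg] y by blast
  ultimately have "j + 3 \<le> n" using x by (cases "j = n - 1 \<or> j = n - 2") auto
  then have "is_cycle E (drop j ps)"
    using is_cycle_drop[OF ps] y j by (simp add: n_def x_def insert_commute)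
  moreover have "set (drop j ps) \<subseteq> V" using \<open>set ps \<subseteq> V\<close> set_drop_subset by fast
  ultimately show ?thesis by blast
qed

lemma forest_has_leaf:
  assumes "simple_graph V E" and "forest V E" and "V \<noteq> {}"
  shows "\<exists>v\<in>V. deg E v \<le> 1"
  using min_deg_two_has_cycle[OF assms(1,3)] assms(2) unfolding forest_def by fastforce

definition potential_weight :: "'a set \<Rightarrow> 'a \<Rightarrow> nat \<Rightarrow> int" where
  "potential_weight F u n = (if u \<in> F then int n - 2 else min 0 (int n - 2))"

definition potential :: "'a set \<Rightarrow> 'a set set \<Rightarrow> 'a set \<Rightarrow> int" where
  "potential V E F = (\<Sum>u\<in>V. potential_weight F u (deg E u))"

lemma potential_weight_le_add:
  "n' \<le> n \<Longrightarrow> n \<le> n' + b \<Longrightarrow> potential_weight F u n \<le> potential_weight F u n' + int b"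
  unfolding potential_weight_def by auto

lemma potential_del_vertex:
  assumes sg: "simple_graph V E" and "v \<in> V"
  shows "potential V E F \<le>
    potential (V - {v}) (del_edges E {v}) F + potential_weight F v (deg E v) + int (deg E v)"
proof -
  have fin: "finite V" using sg by (simp add: simple_graph_def)
  have split: "potential V E F =
      potential_weight F v (deg E v) + (\<Sum>u\<in>V - {v}. potential_weight F u (deg E u))"
    by (simp add: potential_def sum.remove[OF fin \<open>v \<in> V\<close>])
  have "(\<Sum>u\<in>V - {v}. potential_weight F u (deg E u)) \<le>
      (\<Sum>u\<in>V - {v}. potential_weight F u (deg (del_edges E {v}) u) + of_bool ({u, v} \<in> E))"
  proof (rule sum_mono)
    fix u assume "u \<in> V - {v}"
    then have "deg (del_edges E {v}) u = deg E u - of_bool ({u, v} \<in> E)"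
      using deg_del_edges_singleton[OF sg] by auto
    moreover have "{u, v} \<in> E \<Longrightarrow> 0 < deg E u" using deg_pos_if_edge[OF sg] .
    ultimately have "deg (del_edges E {v}) u \<le> deg E u"
      and "deg E u \<le> deg (del_edges E {v}) u + of_bool ({u, v} \<in> E)"
      by auto
    from potential_weight_le_add[OF this]
    show "potential_weight F u (deg E u) \<le>
        potential_weight F u (deg (del_edges E {v}) u) + of_bool ({u, v} \<in> E)"
      by (simp only: of_nat_of_bool)
  qed
  also have "\<dots> = potential (V - {v}) (del_edges E {v}) F + int (card ((V - {v}) \<inter> {u. {u, v} \<in> E}))"
    using fin by (simp add: potential_def sum.distrib)
  finally have nbrs: "(\<Sum>u\<in>V - {v}. potential_weight F u (deg E u)) \<le>
      potential (V - {v}) (del_edges E {v}) F + int (card ((V - {v}) \<inter> {u. {u, v} \<in> E}))" .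
  have "card ((V - {v}) \<inter> {u. {u, v} \<in> E}) \<le> deg E v"
    unfolding deg_def by (rule card_mono[OF finite_neighbours[OF sg]]) blast
  then show ?thesis using split nbrs by linarith
qed

text \<open>The leaf's own weight, at most -1 if it has a neighbour, pays for the degree that
  neighbour loses.\<close>
lemma potential_del_leaf:
  assumes "simple_graph V E" and "v \<in> V" and "deg E v \<le> 1"
  shows "potential V E F \<le> potential (V - {v}) (del_edges E {v}) (F - {v})"
proof -
  have "potential (V - {v}) (del_edges E {v}) (F - {v}) = potential (V - {v}) (del_edges E {v}) F"
    unfolding potential_def potential_weight_def by (rule sum.cong) auto
  moreover have "potential_weight F v (deg E v) + int (deg E v) \<le> 0"
    using assms(3) by (auto simp: potential_weight_def)
  ultimately show ?thesis using potential_del_vertex[OF assms(1,2), of F] by linarith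
qed

lemma potential_del_vertex_outside:
  assumes "simple_graph V E" and "v \<in> V - F" and "deg E v \<le> D"
  shows "potential V E F \<le> potential (V - {v}) (del_edges E {v}) F + int D"
  using potential_del_vertex[of V E v F] assms by (simp add: potential_weight_def)

lemma potential_del_set:
  assumes "finite X" and "X \<subseteq> V - F" and "simple_graph V E" and "\<forall>x\<in>X. deg E x \<le> D"
  shows "potential V E F \<le> potential (V - X) (del_edges E X) F + int D * int (card X)"
  using assms
proof (induction X rule: finite_induct)
  case empty
  then show ?case by simp
next
  case (insert x X)
  have "x \<in> (V - X) - F" using insert.prems(1) insert.hyps(2) by auto
  moreover have "deg (del_edges E X) x \<le> D"
    using deg_del_edges_le[OF insert.prems(2), of X x] insert.prems(3) by auto
  ultimately have "potential (V - X) (del_edges E X) F \<le>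
      potential (V - X - {x}) (del_edges (del_edges E X) {x}) F + int D"
    by (rule potential_del_vertex_outside[OF simple_graph_del_edges[OF insert.prems(2)]])
  moreover have "V - X - {x} = V - insert x X" by auto
  moreover have "del_edges (del_edges E X) {x} = del_edges E (insert x X)"
    by (auto simp: del_edges_def)
  ultimately have step: "potential (V - X) (del_edges E X) F \<le>
      potential (V - insert x X) (del_edges E (insert x X)) F + int D"
    by (simp only:)
  have "potential V E F \<le> potential (V - X) (del_edges E X) F + int D * int (card X)"
    using insert.IH[OF _ insert.prems(2)] insert.prems(1,3) by simp
  moreover have "int D * int (card (insert x X)) = int D * int (card X) + int D"
    using insert.hyps by (simp add: distrib_left)
  ultimately show ?case using step by linarith
qed

lemma potential_forest_nonpos: "simple_graph V E \<Longrightarrow> forest V E \<Longrightarrow> potential V E F \<le> 0"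
proof (induction "card V" arbitrary: V E F rule: less_induct)
  case less
  show ?case
  proof (cases "V = {}")
    case True
    then show ?thesis by (simp add: potential_def)
  next
    case False
    then obtain v where v: "v \<in> V" "deg E v \<le> 1"
      using forest_has_leaf[OF less.prems False] by blast
    have "finite V" using less.prems(1) by (simp add: simple_graph_def)
    then have "card (V - {v}) < card V" using v(1) by (rule card_Diff1_less)
    from less.hyps[OF this simple_graph_del_edges[OF less.prems(1)] forest_del_edges[OF less.prems(2)]]
    have "potential (V - {v}) (del_edges E {v}) (F - {v}) \<le> 0" .
    then show ?thesis using potential_del_leaf[OF less.prems(1) v, of F] by linarith
  qed
qed

lemma potential_insert:
  assumes "finite V" and "v \<in> V" and "v \<notin> F" and "2 \<le> deg E v"
  shows "potential V E (insert v F) = potential V E F + (int (deg E v) - 2)"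
proof -
  have "potential V E F' = potential_weight F' v (deg E v) + (\<Sum>u\<in>V - {v}. potential_weight F' u (deg E u))"
    for F'
    unfolding potential_def using assms(1,2) by (rule sum.remove)
  moreover have "(\<Sum>u\<in>V - {v}. potential_weight (insert v F) u (deg E u)) =
      (\<Sum>u\<in>V - {v}. potential_weight F u (deg E u))"
    by (rule sum.cong) (auto simp: potential_weight_def)
  ultimately show ?thesis
    using assms(3,4) by (simp add: potential_weight_def)
qed

lemma potential_nonneg: "\<forall>u\<in>V. 2 \<le> deg E u \<Longrightarrow> 0 \<le> potential V E F"
  unfolding potential_def by (rule sum_nonneg) (auto simp: potential_weight_def)

lemma potential_empty: "\<forall>u\<in>V. 2 \<le> deg E u \<Longrightarrow> potential V E {} = 0"
  unfolding potential_def by (rule sum.neutral) (auto simp: potential_weight_def)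

lemma fvs_path_subset: "fvs_path V E k F Vm F' \<Longrightarrow> Vm \<subseteq> V \<and> F' \<subseteq> V - F"
  by (induction rule: fvs_path.induct)
    (auto simp: min_fvs_avoiding_def step2_vertex_def max_deg_choice_def)

lemma card_insert_fvs_path:
  assumes "fvs_path V E k F Vm F'" and "finite V"
  shows "v \<notin> V \<Longrightarrow> card (insert v Vm) = card Vm + 1"
    and "v \<in> F \<Longrightarrow> card (insert v F') = card F' + 1"
proof -
  have "Vm \<subseteq> V" and "F' \<subseteq> V - F" using fvs_path_subset[OF assms(1)] by auto
  moreover from this have "finite Vm" and "finite F'" using assms(2) finite_subset by blast+
  ultimately show "v \<notin> V \<Longrightarrow> card (insert v Vm) = card Vm + 1"
    and "v \<in> F \<Longrightarrow> card (insert v F') = card F' + 1"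
    by (auto simp: card_insert_if dest: subsetD)
qed

lemma rescale_bound:
  fixes a b p d D :: int
  assumes "4 \<le> d" and "d \<le> D" and "0 \<le> p" and "d * a + 2 * (p + d - 2) \<le> 2 * d * b"
  shows "D * (a + 1) + 2 * p \<le> 2 * D * b"
proof -
  have "d * (a + 1) + 2 * p \<le> 2 * d * b" using assms(1,4) by (simp add: algebra_simps)
  then have "D * (d * (a + 1) + 2 * p) \<le> D * (2 * d * b)"
    using assms by (intro mult_left_mono) auto
  moreover have "2 * p * d \<le> 2 * p * D" using assms by (intro mult_left_mono) auto
  ultimately have "d * (D * (a + 1) + 2 * p) \<le> d * (2 * D * b)" by (simp add: algebra_simps)
  then show ?thesis using assms(1) by simp
qed

lemma potential_bound_del_vertex:
  assumes "simple_graph V E" and "v \<in> V - F" and "deg E v \<le> D"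
    and "card (insert v Vm) = card Vm + 1"
    and "int D * int (card F') + 2 * potential (V - {v}) (del_edges E {v}) F
      \<le> 2 * int D * int (card Vm)"
  shows "int D * int (card F') + 2 * potential V E F \<le> 2 * int D * int (card (insert v Vm))"
  using potential_del_vertex_outside[OF assms(1-3)] assms(4,5) by (simp add: distrib_left)

lemma fvs_path_potential_bound:
  assumes "fvs_path V E k F Vm F'" and "simple_graph V E" and "4 \<le> D"
    and "\<forall>x\<in>V - F. deg E x \<le> D"
  shows "int D * int (card F') + 2 * potential V E F \<le> 2 * int D * int (card Vm)"
  using assms
proof (induction arbitrary: D rule: fvs_path.induct)
  case (step0 k V E F)
  then show ?case by (simp add: potential_def)
next
  case (step1 k V v E F Vm F')
  have "\<forall>x\<in>(V - {v}) - (F - {v}). deg (del_edges E {v}) x \<le> D"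
    using step1.prems(3) deg_del_edges_le[OF step1.prems(1)] le_trans by blast
  with step1.IH[OF simple_graph_del_edges[OF step1.prems(1)] step1.prems(2)]
    potential_del_leaf[OF step1.prems(1) step1.hyps(3), of F] step1.hyps(4)
  show ?case by linarith
next
  case (step2 k V E F v Vm F')
  have "\<forall>x\<in>(V - {v}) - F. deg (del_edges E {v}) x \<le> D"
    using step2.prems(3) deg_del_edges_le[OF step2.prems(1)] le_trans by blast
  moreover have "v \<in> V - F" using step2.hyps(4) by (auto simp: step2_vertex_def)
  moreover have "card (insert v Vm) = card Vm + 1"
    using card_insert_fvs_path(1)[OF step2.hyps(5)] step2.prems(1) by (simp add: simple_graph_def)
  ultimately show ?case
    using potential_bound_del_vertex[OF step2.prems(1)] step2.prems(3)
      step2.IH[OF simple_graph_del_edges[OF step2.prems(1)] step2.prems(2)] by blast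
next
  case (step4' V E k F v X)
  have X: "X \<subseteq> V - F" "forest (V - X) (del_edges E X)"
    using step4'.hyps(4) by (auto simp: min_fvs_avoiding_def)
  have "finite X" using X(1) step4'.prems(1) finite_subset by (auto simp: simple_graph_def)
  have "potential V E F \<le> potential (V - X) (del_edges E X) F + int D * int (card X)"
    using potential_del_set[OF \<open>finite X\<close> X(1) step4'.prems(1)] X(1) step4'.prems(3) by blast
  moreover have "potential (V - X) (del_edges E X) F \<le> 0"
    using potential_forest_nonpos[OF simple_graph_del_edges[OF step4'.prems(1)] X(2)] .
  ultimately show ?case by (simp add: mult.assoc)
next
  case (step5 V E k F v Vm F')
  have "\<forall>x\<in>(V - {v}) - F. deg (del_edges E {v}) x \<le> D"
    using step5.prems(3) deg_del_edges_le[OF step5.prems(1)] le_trans by blast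
  moreover have "v \<in> V - F" using step5.hyps(2) by (auto simp: max_deg_choice_def)
  moreover have "card (insert v Vm) = card Vm + 1"
    using card_insert_fvs_path(1)[OF step5.hyps(4)] step5.prems(1) by (simp add: simple_graph_def)
  ultimately show ?case
    using potential_bound_del_vertex[OF step5.prems(1)] step5.prems(3)
      step5.IH[OF simple_graph_del_edges[OF step5.prems(1)] step5.prems(2)] by blast
next
  case (step6 V E k F v Vm F')
  define d where "d = deg E v"
  have v: "v \<in> V" "v \<notin> F" and max: "\<forall>x\<in>V - F. deg E x \<le> d"
    using step6.hyps(2) by (auto simp: max_deg_choice_def d_def)
  have deg2: "\<forall>u\<in>V. 2 \<le> deg E u" using step6.hyps(1) by (simp add: reaches_step3_def)
  have fin: "finite V" using step6.prems(1) by (simp add: simple_graph_def)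
  have "int d * int (card F') + 2 * potential V E (insert v F) \<le> 2 * int d * int (card Vm)"
    using step6.IH[OF step6.prems(1), of d] step6.hyps(3) max by (auto simp: d_def)
  moreover have "potential V E (insert v F) = potential V E F + (int d - 2)"
    using potential_insert[OF fin v] deg2 v(1) by (simp add: d_def)
  moreover have "d \<le> D" using step6.prems(3) v by (simp add: d_def)
  ultimately have "int D * (int (card F') + 1) + 2 * potential V E F \<le> 2 * int D * int (card Vm)"
    using rescale_bound[of "int d" "int D" "potential V E F" "int (card F')" "int (card Vm)"]
      step6.hyps(3) potential_nonneg[OF deg2] by (simp add: d_def)
  moreover have "card (insert v F') = card F' + 1"
    using card_insert_fvs_path(2)[OF step6.hyps(4) fin] by simp
  ultimately show ?case by (simp add: add.commute)
qed

lemma fvs_path_from_empty: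
  "fvs_path V E k F Vm F' \<Longrightarrow> F = {} \<Longrightarrow> simple_graph V E \<Longrightarrow> card F' \<le> 2 * card Vm"
proof (induction rule: fvs_path.induct)
  case (step1 k V v E F Vm F')
  then show ?case using simple_graph_del_edges by blast
next
  case (step2 k V E F v Vm F')
  have "card Vm \<le> card (insert v Vm)"
    using card_insert_fvs_path(1)[OF step2.hyps(5)] step2.prems(2) by (simp add: simple_graph_def)
  then show ?case using step2.IH step2.prems simple_graph_del_edges by fastforce
next
  case (step5 V E k F v Vm F')
  have "card Vm \<le> card (insert v Vm)"
    using card_insert_fvs_path(1)[OF step5.hyps(4)] step5.prems(2) by (simp add: simple_graph_def)
  then show ?case using step5.IH step5.prems simple_graph_del_edges by fastforce
next
  case (step6 V E k F v Vm F')
  define d where "d = deg E v"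
  have v: "v \<in> V" "v \<notin> F" and max: "\<forall>x\<in>V - {v}. deg E x \<le> d"
    using step6.hyps(2) step6.prems(1) by (auto simp: max_deg_choice_def d_def)
  have deg2: "\<forall>u\<in>V. 2 \<le> deg E u" using step6.hyps(1) by (simp add: reaches_step3_def)
  have fin: "finite V" using step6.prems(2) by (simp add: simple_graph_def)
  have "int d * int (card F') + 2 * potential V E {v} \<le> 2 * int d * int (card Vm)"
    using fvs_path_potential_bound[OF step6.hyps(4)] step6.prems step6.hyps(3) max
    by (auto simp: d_def)
  moreover have "potential V E {v} = int d - 2"
    using potential_insert[OF fin v] potential_empty[OF deg2] deg2 v step6.prems(1)
    by (simp add: d_def)
  ultimately have "int d * int (card F' + 1) \<le> int d * (2 * int (card Vm))"
    using rescale_bound[of "int d" "int d" 0 "int (card F')" "int (card Vm)"] step6.hyps(3)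
    by (simp add: d_def algebra_simps)
  then have "card F' + 1 \<le> 2 * card Vm" using step6.hyps(3) by (simp add: d_def)
  moreover have "card (insert v F') = card F' + 1"
    using card_insert_fvs_path(2)[OF step6.hyps(4) fin] by simp
  ultimately show ?case by simp
qed simp_all

theorem mainTheorem8:
  fixes V :: "'a set" and E :: "'a set set" and k :: int
  assumes "simple_graph V E"
    and "fvs_path V E k {} Vm F'"
  shows "card F' \<le> 2 * card Vm"
  using fvs_path_from_empty[OF assms(2) refl assms(1)] .

end
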